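(* Let $M^\alpha,M^\beta$ be manifolds equipped with flows $\phi^\alpha,\phi^\beta$, let $N^\alpha,N^\beta$ be isolating neighborhoods, and let $h^{\beta\alpha}:M^\alpha\to M^\beta$ be an isolated map. Then there exists an open neighborhood $A$ of $(\phi^\alpha,h^{\beta\alpha},\phi^\beta)$ in $\mathscr{C}=\{(\tilde\phi^\alpha,\tilde h^{\beta\alpha},\tilde\phi^\beta)\in C^\infty(\mathbb{R}\times M^\alpha,M^\alpha)\times C^\infty(M^\alpha,M^\beta)\times C^\infty(\mathbb{R}\times M^\beta,M^\beta):N^\alpha,N^\beta\text{ are isolating neighborhoods of the flows }\tilde\phi^\alpha,\tilde\phi^\beta\}$, equipped with the compact-open topology, such that for every $(\tilde\phi^\alpha,\tilde h^{\beta\alpha},\tilde\phi^\beta)\in A$ the map $\tilde h^{\beta\alpha}$ is isolated with respect to $N^\alpha,N^\beta$ and the flows $\tilde\phi^\alpha,\tilde\phi^\beta$.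
   Context: A compact neighborhood $N$ is an isolating neighborhood for a flow $\phi$ if $\operatorname{Inv}(N,\phi)=\{x\in N:\phi(t,x)\in N\ \forall t\in\mathbb{R}\}\subset\operatorname{Int}N$. For a point $p$, $\mathcal{O}_+(p)=\{\phi(t,p):t\ge0\}$ and $\mathcal{O}_-(p)=\{\phi(t,p):t\le0\}$. A map $h:M^\alpha\to M^\beta$ is isolated (with respect to $N^\alpha,N^\beta$ and flows $\phi^\alpha,\phi^\beta$) if every $p$ in $S_h=\{p\in N^\alpha:\mathcal{O}_-(p)\subset N^\alpha,\ \mathcal{O}_+(h(p))\subset N^\beta\}$ satisfies $\mathcal{O}_-(p)\subset\operatorname{Int}N^\alpha$ and $\mathcal{O}_+(h(p))\subset\operatorname{Int}N^\beta$ (orbits taken with respect to $\phi^\alpha$, resp. $\phi^\beta$). *)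

theory Defs
  imports "HOL-Analysis.Analysis"
begin

definition is_flow :: "(real \<times> 'a::topological_space \<Rightarrow> 'a) \<Rightarrow> bool" where
  "is_flow \<phi> \<longleftrightarrow> continuous_on UNIV \<phi> \<and> (\<forall>x. \<phi> (0, x) = x) \<and>
     (\<forall>s t x. \<phi> (s + t, x) = \<phi> (s, \<phi> (t, x)))"

definition Inv :: "'a set \<Rightarrow> (real \<times> 'a \<Rightarrow> 'a) \<Rightarrow> 'a set" where
  "Inv N \<phi> = {x \<in> N. \<forall>t. \<phi> (t, x) \<in> N}"

definition isolating_nbhd :: "'a::topological_space set \<Rightarrow> (real \<times> 'a \<Rightarrow> 'a) \<Rightarrow> bool" where
  "isolating_nbhd N \<phi> \<longleftrightarrow> compact N \<and> Inv N \<phi> \<subseteq> interior N"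

definition fwd_orbit :: "(real \<times> 'a \<Rightarrow> 'a) \<Rightarrow> 'a \<Rightarrow> 'a set" where
  "fwd_orbit \<phi> p = {\<phi> (t, p) | t. t \<ge> 0}"

definition bwd_orbit :: "(real \<times> 'a \<Rightarrow> 'a) \<Rightarrow> 'a \<Rightarrow> 'a set" where
  "bwd_orbit \<phi> p = {\<phi> (t, p) | t. t \<le> 0}"

definition S_set :: "(real \<times> 'a \<Rightarrow> 'a) \<Rightarrow> ('a \<Rightarrow> 'b) \<Rightarrow> (real \<times> 'b \<Rightarrow> 'b)
    \<Rightarrow> 'a set \<Rightarrow> 'b set \<Rightarrow> 'a set" where
  "S_set \<phi>a h \<phi>b Na Nb = {p \<in> Na. bwd_orbit \<phi>a p \<subseteq> Na \<and> fwd_orbit \<phi>b (h p) \<subseteq> Nb}"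

definition isolated_map :: "(real \<times> 'a::topological_space \<Rightarrow> 'a) \<Rightarrow> ('a \<Rightarrow> 'b)
    \<Rightarrow> (real \<times> 'b::topological_space \<Rightarrow> 'b) \<Rightarrow> 'a set \<Rightarrow> 'b set \<Rightarrow> bool" where
  "isolated_map \<phi>a h \<phi>b Na Nb \<longleftrightarrow>
     (\<forall>p \<in> S_set \<phi>a h \<phi>b Na Nb.
        bwd_orbit \<phi>a p \<subseteq> interior Na \<and> fwd_orbit \<phi>b (h p) \<subseteq> interior Nb)"

definition compact_open :: "('a::topological_space \<Rightarrow> 'b::topological_space) topology" where
  "compact_open = subtopology
     (topology_generated_by {{f. f ` K \<subseteq> U} | K U. compact K \<and> open U})
     {f. continuous_on UNIV f}"

definition C_space :: "'a::topological_space set \<Rightarrow> 'b::topological_space set \<Rightarrow>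
    ((real \<times> 'a \<Rightarrow> 'a) \<times> ('a \<Rightarrow> 'b) \<times> (real \<times> 'b \<Rightarrow> 'b)) set" where
  "C_space Na Nb = {(\<phi>a, h, \<phi>b). is_flow \<phi>a \<and> continuous_on UNIV h \<and> is_flow \<phi>b \<and>
      isolating_nbhd Na \<phi>a \<and> isolating_nbhd Nb \<phi>b}"

definition C_topology :: "'a::topological_space set \<Rightarrow> 'b::topological_space set \<Rightarrow>
    ((real \<times> 'a \<Rightarrow> 'a) \<times> ('a \<Rightarrow> 'b) \<times> (real \<times> 'b \<Rightarrow> 'b)) topology" where
  "C_topology Na Nb = subtopology (prod_topology compact_open (prod_topology compact_open compact_open))
      (C_space Na Nb)"

end

theory Submission
  imports Defs
begin

text \<open>A boundary point of an isolating neighbourhood N leaves N in finite time. Evaluation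
  is continuous for the compact-open topology on maps out of a locally compact space, so by
  compactness of the boundary some T bounds these exit times uniformly for all flows near the
  given one. Similarly each p in Na either escapes (its backward orbit leaves Na or the forward
  orbit of h p leaves Nb) in bounded time, or, as h is isolated, both orbits lie in the
  interiors; both alternatives are open, so by compactness of Na one of them holds for every
  point and every triple near the given one, the second on the time window [-T, 0], resp.
  [0, T]. For a point of the set S of a nearby triple escaping is impossible, so its orbits
  are interior on that window, and an orbit point beyond the window lying on the boundary
  would leave N within time T while still on the half-orbit.\<close>

lemma topspace_compact_open:
  "topspace (compact_open :: ('a::topological_space \<Rightarrow> 'b::topological_space) topology)
     = {f. continuous_on UNIV f}"
proof -
  have "(UNIV :: ('a \<Rightarrow> 'b) set) \<in> {{f. f ` K \<subseteq> U} | K U. compact K \<and> open U}"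
    by (rule CollectI, rule exI[of _ "{}"], rule exI[of _ UNIV]) auto
  then have "\<Union> {{f::'a \<Rightarrow> 'b. f ` K \<subseteq> U} | K U. compact K \<and> open U} = UNIV"
    by blast
  then show ?thesis
    unfolding compact_open_def topspace_subtopology topology_generated_by_topspace by simp
qed

lemma openin_compact_open_maps_into:
  assumes "compact K" "open U"
  shows "openin compact_open {f. continuous_on UNIV f \<and> f ` K \<subseteq> U}"
  unfolding compact_open_def openin_subtopology
  using assms
  by (intro exI[of _ "{f. f ` K \<subseteq> U}"])
     (auto simp: openin_topology_generated_by_iff intro!: generate_topology_on.Basis)

lemma locally_compact_compact_nbhd:
  fixes p :: "'a::t2_space"
  assumes "locally_compact_space (euclidean :: 'a topology)" "open U" "p \<in> U"
  obtains V K where "open V" "compact K" "p \<in> V" "V \<subseteq> K" "K \<subseteq> U"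
proof -
  have "Hausdorff_space (euclidean :: 'a topology)"
    unfolding Hausdorff_space_def disjnt_def by (metis hausdorff open_openin)
  then have "neighbourhood_base_of (compactin euclidean) (euclidean :: 'a topology)"
    using locally_compact_space_neighbourhood_base assms(1) by blast
  with assms(2,3) show ?thesis
    unfolding neighbourhood_base_of open_openin[symmetric] compactin_euclidean_iff
    using that by metis
qed

lemma compact_open_nbhd_image:
  fixes f :: "'a::t2_space \<Rightarrow> 'b::topological_space"
  assumes lc: "locally_compact_space (euclidean :: 'a topology)"
    and f: "continuous_on UNIV f" and U: "open U" and fp: "f p \<in> U"
  obtains V W where "open V" "p \<in> V" "openin compact_open W" "f \<in> W"
    "\<And>g. g \<in> W \<Longrightarrow> g ` V \<subseteq> U"
proof -
  have "open (f -` U)"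
    using f U continuous_on_open_vimage[of UNIV f] by auto
  then obtain V K where VK: "open V" "compact K" "p \<in> V" "V \<subseteq> K" "K \<subseteq> f -` U"
    using locally_compact_compact_nbhd[OF lc] fp by blast
  let ?W = "{g. continuous_on UNIV g \<and> g ` K \<subseteq> U}"
  have "openin compact_open ?W"
    using VK U by (intro openin_compact_open_maps_into)
  moreover have "f \<in> ?W" "\<And>g. g \<in> ?W \<Longrightarrow> g ` V \<subseteq> U"
    using f VK by auto
  ultimately show thesis
    using that VK by blast
qed

lemma compact_open_nbhd_tube:
  fixes \<phi> :: "'c::topological_space \<times> 'a::t2_space \<Rightarrow> 'b::topological_space"
  assumes lc: "locally_compact_space (euclidean :: 'a topology)"
    and \<phi>: "continuous_on UNIV \<phi>" and I: "compact I" and U: "open U"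
    and sub: "\<phi> ` (I \<times> {p}) \<subseteq> U"
  obtains V W where "open V" "p \<in> V" "openin compact_open W" "\<phi> \<in> W"
    "\<And>\<psi>. \<psi> \<in> W \<Longrightarrow> \<psi> ` (I \<times> V) \<subseteq> U"
proof -
  have "openin (prod_topology euclidean euclidean) (\<phi> -` U)"
    using \<phi> U continuous_on_open_vimage[of UNIV \<phi>] by simp
  moreover have "I \<times> {p} \<subseteq> \<phi> -` U"
    using sub by auto
  ultimately have "\<exists>A B. openin euclidean A \<and> openin euclidean B \<and> I \<subseteq> A \<and> p \<in> B \<and>
      A \<times> B \<subseteq> \<phi> -` U"
    using I by (intro tube_lemma_left) auto
  then obtain A B where AB: "openin euclidean B" "I \<subseteq> A" "p \<in> B" "A \<times> B \<subseteq> \<phi> -` U"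
    by blast
  have "open B"
    using AB(1) by simp
  obtain V K where VK: "open V" "compact K" "p \<in> V" "V \<subseteq> K" "K \<subseteq> B"
    by (rule locally_compact_compact_nbhd[OF lc \<open>open B\<close> AB(3)])
  let ?W = "{\<psi>. continuous_on UNIV \<psi> \<and> \<psi> ` (I \<times> K) \<subseteq> U}"
  have "openin compact_open ?W"
    using I VK U by (intro openin_compact_open_maps_into compact_Times)
  moreover have "\<phi> \<in> ?W"
    using \<phi> AB VK by blast
  moreover have "\<And>\<psi>. \<psi> \<in> ?W \<Longrightarrow> \<psi> ` (I \<times> V) \<subseteq> U"
    using VK by blast
  ultimately show thesis
    using that VK by blast
qed

lemma compact_uniform_nbhd:
  fixes S :: "'a::topological_space set" and P :: "real \<Rightarrow> 'w \<Rightarrow> 'a \<Rightarrow> bool"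
  assumes S: "compact S" and a: "a \<in> topspace X"
    and local_nbhd: "\<And>x. x \<in> S \<Longrightarrow>
      \<exists>V W r. open V \<and> x \<in> V \<and> openin X W \<and> a \<in> W \<and> (\<forall>w\<in>W. \<forall>y\<in>V. P r w y)"
    and mono: "\<And>r r' w y. r \<le> r' \<Longrightarrow> P r w y \<Longrightarrow> P r' w y"
  obtains W R where "openin X W" "a \<in> W" "\<And>w y. w \<in> W \<Longrightarrow> y \<in> S \<Longrightarrow> P R w y"
proof -
  have "\<forall>x\<in>S. \<exists>V W r. open V \<and> x \<in> V \<and> openin X W \<and> a \<in> W \<and> (\<forall>w\<in>W. \<forall>y\<in>V. P r w y)"
    using local_nbhd by blast
  then obtain V W r where VWr: "\<forall>x\<in>S. open (V x) \<and> x \<in> V x \<and> openin X (W x) \<and>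
      a \<in> W x \<and> (\<forall>w\<in>W x. \<forall>y\<in>V x. P (r x) w y)"
    by metis
  then have "S \<subseteq> (\<Union>x\<in>S. V x)"
    by blast
  then obtain D where D: "D \<subseteq> S" "finite D" "S \<subseteq> (\<Union>x\<in>D. V x)"
    using compactE_image[OF S, of S V] VWr by blast
  let ?W = "(\<Inter>x\<in>D. W x) \<inter> topspace X" and ?R = "Max (insert 0 (r ` D))"
  have "openin X ?W"
    using D VWr by (intro openin_INT) auto
  moreover have "a \<in> ?W"
    using D VWr a by auto
  moreover have "P ?R w y" if "w \<in> ?W" "y \<in> S" for w y
  proof -
    obtain x where x: "x \<in> D" "y \<in> V x"
      using D \<open>y \<in> S\<close> by blast
    then have "P (r x) w y"
      using VWr D that by blast
    moreover have "r x \<le> ?R"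
      using D x by (intro Max_ge) auto
    ultimately show ?thesis
      using mono by blast
  qed
  ultimately show thesis
    using that by blast
qed

lemma fwd_orbit_subset_iff: "fwd_orbit \<phi> p \<subseteq> N \<longleftrightarrow> (\<forall>t\<ge>0. \<phi> (t, p) \<in> N)"
  unfolding fwd_orbit_def by blast

lemma bwd_orbit_subset_iff: "bwd_orbit \<phi> p \<subseteq> N \<longleftrightarrow> (\<forall>t\<le>0. \<phi> (t, p) \<in> N)"
  unfolding bwd_orbit_def by blast

definition flow_reverse :: "(real \<times> 'a \<Rightarrow> 'a) \<Rightarrow> real \<times> 'a \<Rightarrow> 'a" where
  "flow_reverse \<phi> = (\<lambda>(t, x). \<phi> (- t, x))"

lemma is_flow_reverse:
  assumes "is_flow \<phi>"
  shows "is_flow (flow_reverse \<phi>)"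
proof -
  have "continuous_on UNIV (\<lambda>(t::real, x::'a). (- t, x))"
    by (simp add: case_prod_unfold continuous_intros)
  moreover have "continuous_on UNIV \<phi>"
    using assms unfolding is_flow_def by simp
  ultimately have "continuous_on UNIV (\<lambda>z. \<phi> ((\<lambda>(t, x). (- t, x)) z))"
    using continuous_on_compose2 by blast
  then show ?thesis
    using assms unfolding is_flow_def flow_reverse_def
    by (simp add: case_prod_unfold) (metis diff_conv_add_uminus)
qed

lemma bwd_orbit_eq_fwd_orbit_reverse: "bwd_orbit \<phi> p = fwd_orbit (flow_reverse \<phi>) p"
  unfolding bwd_orbit_def fwd_orbit_def flow_reverse_def
  by (auto intro: exI[of _ "- t" for t])

lemma fwd_orbit_subset_interior:
  assumes flow: "is_flow \<psi>" and "R \<le> T"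
    and exit: "\<And>y. y \<in> frontier N \<Longrightarrow> \<exists>s. \<bar>s\<bar> \<le> R \<and> \<psi> (s, y) \<notin> N"
    and orbit: "fwd_orbit \<psi> q \<subseteq> N"
    and initial: "\<psi> ` ({0..T} \<times> {q}) \<subseteq> interior N"
  shows "fwd_orbit \<psi> q \<subseteq> interior N"
proof
  fix z
  assume "z \<in> fwd_orbit \<psi> q"
  then obtain t where t: "0 \<le> t" "z = \<psi> (t, q)"
    unfolding fwd_orbit_def by blast
  have inN: "\<psi> (t', q) \<in> N" if "0 \<le> t'" for t'
    using orbit that unfolding fwd_orbit_def by blast
  show "z \<in> interior N"
  proof (rule ccontr)
    assume z: "z \<notin> interior N"
    then have "T < t"
      using initial t by force
    have "z \<in> frontier N"
      using z inN t closure_subset unfolding frontier_def by blast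
    then obtain s where s: "\<bar>s\<bar> \<le> R" "\<psi> (s, z) \<notin> N"
      using exit by blast
    have "\<psi> (s, z) = \<psi> (s + t, q)"
      using flow t(2) unfolding is_flow_def by simp
    then show False
      using inN[of "s + t"] s \<open>R \<le> T\<close> \<open>T < t\<close> by simp
  qed
qed

lemma bwd_orbit_subset_interior:
  assumes flow: "is_flow \<psi>" and "R \<le> T"
    and exit: "\<And>y. y \<in> frontier N \<Longrightarrow> \<exists>s. \<bar>s\<bar> \<le> R \<and> \<psi> (s, y) \<notin> N"
    and orbit: "bwd_orbit \<psi> p \<subseteq> N"
    and initial: "\<psi> ` ({- T..0} \<times> {p}) \<subseteq> interior N"
  shows "bwd_orbit \<psi> p \<subseteq> interior N"
proof -
  have "\<exists>s. \<bar>s\<bar> \<le> R \<and> flow_reverse \<psi> (s, y) \<notin> N" if y: "y \<in> frontier N" for y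
  proof -
    obtain s where "\<bar>s\<bar> \<le> R" "\<psi> (s, y) \<notin> N"
      using exit[OF y] by blast
    then show ?thesis
      by (intro exI[of _ "- s"]) (simp add: flow_reverse_def)
  qed
  moreover have "flow_reverse \<psi> ` ({0..T} \<times> {p}) \<subseteq> interior N"
    using initial by (force simp: flow_reverse_def)
  ultimately show ?thesis
    using fwd_orbit_subset_interior[OF is_flow_reverse[OF flow] \<open>R \<le> T\<close>, of N p] orbit
    unfolding bwd_orbit_eq_fwd_orbit_reverse by blast
qed

lemma isolating_nbhd_uniform_exit:
  fixes \<phi> :: "real \<times> 'a::t2_space \<Rightarrow> 'a"
  assumes lc: "locally_compact_space (euclidean :: 'a topology)"
    and flow: "is_flow \<phi>" and iso: "isolating_nbhd N \<phi>"
  obtains W R where "openin compact_open W" "\<phi> \<in> W"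
    "\<And>\<psi> y. \<psi> \<in> W \<Longrightarrow> y \<in> frontier N \<Longrightarrow> \<exists>s. \<bar>s\<bar> \<le> R \<and> \<psi> (s, y) \<notin> N"
proof -
  have cont: "continuous_on UNIV \<phi>" and "compact N"
    using flow iso unfolding is_flow_def isolating_nbhd_def by simp_all
  then have closed: "closed N"
    by (simp add: compact_imp_closed)
  have compact: "compact (frontier N)"
    using compact_Int_closed[OF \<open>compact N\<close> frontier_closed[of N]] frontier_subset_closed[OF closed]
    by (simp add: Int_absorb1)
  have "\<phi> \<in> topspace compact_open"
    using cont unfolding topspace_compact_open by simp
  moreover have "\<exists>V W r. open V \<and> x \<in> V \<and> openin compact_open W \<and> \<phi> \<in> W \<and>
      (\<forall>\<psi>\<in>W. \<forall>y\<in>V. \<exists>s. \<bar>s\<bar> \<le> r \<and> \<psi> (s, y) \<notin> N)" if x: "x \<in> frontier N" for x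
  proof -
    have "x \<in> N - Inv N \<phi>"
      using iso x closed unfolding isolating_nbhd_def frontier_def by auto
    then obtain s where "\<phi> (s, x) \<notin> N"
      unfolding Inv_def by blast
    then have "\<phi> ` ({s} \<times> {x}) \<subseteq> - N"
      by auto
    moreover have "open (- N)"
      using closed by auto
    ultimately obtain V W where "open V" "x \<in> V" "openin compact_open W" "\<phi> \<in> W"
        "\<And>\<psi>. \<psi> \<in> W \<Longrightarrow> \<psi> ` ({s} \<times> V) \<subseteq> - N"
      using compact_open_nbhd_tube[OF lc cont compact_sing] by metis
    then show ?thesis
      by (intro exI[of _ V] exI[of _ W] exI[of _ "\<bar>s\<bar>"]) blast
  qed
  ultimately show thesis
    by (rule compact_uniform_nbhd[OF compact, where P = "\<lambda>r \<psi> y. \<exists>s. \<bar>s\<bar> \<le> r \<and> \<psi> (s, y) \<notin> N"])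
      (force intro: that)+
qed

definition escapes_within :: "'a set \<Rightarrow> 'b set \<Rightarrow> real \<Rightarrow> (real \<times> 'a \<Rightarrow> 'a) \<Rightarrow> ('a \<Rightarrow> 'b)
    \<Rightarrow> (real \<times> 'b \<Rightarrow> 'b) \<Rightarrow> 'a \<Rightarrow> bool" where
  "escapes_within Na Nb r \<psi>a g \<psi>b p \<longleftrightarrow>
     (\<exists>t\<in>{- r..0}. \<psi>a (t, p) \<notin> Na) \<or> (\<exists>t\<in>{0..r}. \<psi>b (t, g p) \<notin> Nb)"

definition stays_in_interior :: "'a::topological_space set \<Rightarrow> 'b::topological_space set \<Rightarrow> real
    \<Rightarrow> (real \<times> 'a \<Rightarrow> 'a) \<Rightarrow> ('a \<Rightarrow> 'b) \<Rightarrow> (real \<times> 'b \<Rightarrow> 'b) \<Rightarrow> 'a \<Rightarrow> bool" where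
  "stays_in_interior Na Nb T \<psi>a g \<psi>b p \<longleftrightarrow>
     \<psi>a ` ({- T..0} \<times> {p}) \<subseteq> interior Na \<and> \<psi>b ` ({0..T} \<times> {g p}) \<subseteq> interior Nb"

lemma escapes_within_mono:
  "r \<le> r' \<Longrightarrow> escapes_within Na Nb r \<psi>a g \<psi>b p \<Longrightarrow> escapes_within Na Nb r' \<psi>a g \<psi>b p"
  unfolding escapes_within_def by force

lemma not_escapes_within_if_S_set:
  "p \<in> S_set \<psi>a g \<psi>b Na Nb \<Longrightarrow> \<not> escapes_within Na Nb r \<psi>a g \<psi>b p"
  unfolding S_set_def escapes_within_def bwd_orbit_subset_iff fwd_orbit_subset_iff by auto

lemma isolated_map_escapes_or_stays:
  assumes "isolated_map \<phi>a h \<phi>b Na Nb" and "p \<in> Na"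
  shows "(\<exists>r. escapes_within Na Nb r \<phi>a h \<phi>b p) \<or> stays_in_interior Na Nb T \<phi>a h \<phi>b p"
proof (cases "\<exists>r. escapes_within Na Nb r \<phi>a h \<phi>b p")
  case stays: False
  have "\<phi>a (t, p) \<in> Na" if "t \<le> 0" for t
    using stays that unfolding escapes_within_def by (metis atLeastAtMost_iff minus_minus order_refl)
  moreover have "\<phi>b (t, h p) \<in> Nb" if "0 \<le> t" for t
    using stays that unfolding escapes_within_def by (metis atLeastAtMost_iff order_refl)
  ultimately have "p \<in> S_set \<phi>a h \<phi>b Na Nb"
    using \<open>p \<in> Na\<close> unfolding S_set_def bwd_orbit_subset_iff fwd_orbit_subset_iff by blast
  then have "bwd_orbit \<phi>a p \<subseteq> interior Na" "fwd_orbit \<phi>b (h p) \<subseteq> interior Nb"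
    using assms(1) unfolding isolated_map_def by blast+
  then show ?thesis
    unfolding stays_in_interior_def bwd_orbit_subset_iff fwd_orbit_subset_iff by auto
qed blast

abbreviation triple_compact_open :: "((real \<times> 'a::topological_space \<Rightarrow> 'a) \<times>
    ('a \<Rightarrow> 'b::topological_space) \<times> (real \<times> 'b \<Rightarrow> 'b)) topology" where
  "triple_compact_open \<equiv> prod_topology compact_open (prod_topology compact_open compact_open)"

lemma openin_C_topology:
  "openin triple_compact_open W \<Longrightarrow> openin (C_topology Na Nb) (W \<inter> C_space Na Nb)"
  unfolding C_topology_def openin_subtopology by blast

lemma escapes_within_local:
  fixes \<phi>a :: "real \<times> 'a::t2_space \<Rightarrow> 'a" and \<phi>b :: "real \<times> 'b::t2_space \<Rightarrow> 'b"
    and h :: "'a \<Rightarrow> 'b"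
  assumes lca: "locally_compact_space (euclidean :: 'a topology)"
    and lcb: "locally_compact_space (euclidean :: 'b topology)"
    and cont: "continuous_on UNIV \<phi>a" "continuous_on UNIV h" "continuous_on UNIV \<phi>b"
    and closed: "closed Na" "closed Nb"
    and escapes: "escapes_within Na Nb r \<phi>a h \<phi>b p"
  shows "\<exists>V W. open V \<and> p \<in> V \<and> openin triple_compact_open W \<and> (\<phi>a, h, \<phi>b) \<in> W \<and>
           (\<forall>(\<psi>a, g, \<psi>b) \<in> W. \<forall>y\<in>V. escapes_within Na Nb r \<psi>a g \<psi>b y)"
proof -
  have open_compl: "open (- Na)" "open (- Nb)"
    using closed by auto
  from escapes consider
      (bwd) t where "t \<in> {- r..0}" "\<phi>a (t, p) \<notin> Na"
    | (fwd) t where "t \<in> {0..r}" "\<phi>b (t, h p) \<notin> Nb"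
    unfolding escapes_within_def by blast
  then show ?thesis
  proof cases
    case bwd
    then have "\<phi>a ` ({t} \<times> {p}) \<subseteq> - Na"
      by auto
    then obtain V Wa where V: "open V" "p \<in> V"
        and Wa: "openin compact_open Wa" "\<phi>a \<in> Wa" "\<And>\<psi>. \<psi> \<in> Wa \<Longrightarrow> \<psi> ` ({t} \<times> V) \<subseteq> - Na"
      using compact_open_nbhd_tube[OF lca cont(1) compact_sing open_compl(1)] by metis
    let ?W = "Wa \<times> topspace compact_open \<times> topspace compact_open"
    have "openin triple_compact_open ?W"
      using Wa(1) by (simp add: openin_prod_Times_iff)
    moreover have "(\<phi>a, h, \<phi>b) \<in> ?W"
      using Wa(2) cont by (simp add: topspace_compact_open)
    moreover have "\<forall>(\<psi>a, g, \<psi>b) \<in> ?W. \<forall>y\<in>V. escapes_within Na Nb r \<psi>a g \<psi>b y"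
      using Wa(3) bwd(1) unfolding escapes_within_def by fastforce
    ultimately show ?thesis
      using V by blast
  next
    case fwd
    then have "\<phi>b ` ({t} \<times> {h p}) \<subseteq> - Nb"
      by auto
    then obtain Vb Wb where Vb: "open Vb" "h p \<in> Vb" and Wb: "openin compact_open Wb" "\<phi>b \<in> Wb"
        "\<And>\<psi>. \<psi> \<in> Wb \<Longrightarrow> \<psi> ` ({t} \<times> Vb) \<subseteq> - Nb"
      using compact_open_nbhd_tube[OF lcb cont(3) compact_sing open_compl(2)] by metis
    obtain V Wg where V: "open V" "p \<in> V"
        and Wg: "openin compact_open Wg" "h \<in> Wg" "\<And>g. g \<in> Wg \<Longrightarrow> g ` V \<subseteq> Vb"
      using compact_open_nbhd_image[OF lca cont(2) Vb] by metis
    let ?W = "topspace compact_open \<times> Wg \<times> Wb"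
    have "openin triple_compact_open ?W"
      using Wg(1) Wb(1) by (simp add: openin_prod_Times_iff)
    moreover have "(\<phi>a, h, \<phi>b) \<in> ?W"
      using Wg(2) Wb(2) cont by (simp add: topspace_compact_open)
    moreover have "\<forall>(\<psi>a, g, \<psi>b) \<in> ?W. \<forall>y\<in>V. escapes_within Na Nb r \<psi>a g \<psi>b y"
      using Wg(3) Wb(3) fwd(1) unfolding escapes_within_def by fastforce
    ultimately show ?thesis
      using V by blast
  qed
qed

lemma stays_in_interior_local:
  fixes \<phi>a :: "real \<times> 'a::t2_space \<Rightarrow> 'a" and \<phi>b :: "real \<times> 'b::t2_space \<Rightarrow> 'b"
    and h :: "'a \<Rightarrow> 'b"
  assumes lca: "locally_compact_space (euclidean :: 'a topology)"
    and lcb: "locally_compact_space (euclidean :: 'b topology)"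
    and cont: "continuous_on UNIV \<phi>a" "continuous_on UNIV h" "continuous_on UNIV \<phi>b"
    and stays: "stays_in_interior Na Nb T \<phi>a h \<phi>b p"
  shows "\<exists>V W. open V \<and> p \<in> V \<and> openin triple_compact_open W \<and> (\<phi>a, h, \<phi>b) \<in> W \<and>
           (\<forall>(\<psi>a, g, \<psi>b) \<in> W. \<forall>y\<in>V. stays_in_interior Na Nb T \<psi>a g \<psi>b y)"
proof -
  obtain Va Wa where Va: "open Va" "p \<in> Va" and Wa: "openin compact_open Wa" "\<phi>a \<in> Wa"
      "\<And>\<psi>. \<psi> \<in> Wa \<Longrightarrow> \<psi> ` ({- T..0} \<times> Va) \<subseteq> interior Na"
    using compact_open_nbhd_tube[OF lca cont(1) compact_Icc open_interior] stays
    unfolding stays_in_interior_def by metis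
  obtain Vb Wb where Vb: "open Vb" "h p \<in> Vb" and Wb: "openin compact_open Wb" "\<phi>b \<in> Wb"
      "\<And>\<psi>. \<psi> \<in> Wb \<Longrightarrow> \<psi> ` ({0..T} \<times> Vb) \<subseteq> interior Nb"
    using compact_open_nbhd_tube[OF lcb cont(3) compact_Icc open_interior] stays
    unfolding stays_in_interior_def by metis
  obtain V Wg where V: "open V" "p \<in> V" and Wg: "openin compact_open Wg" "h \<in> Wg"
      "\<And>g. g \<in> Wg \<Longrightarrow> g ` V \<subseteq> Vb"
    using compact_open_nbhd_image[OF lca cont(2) Vb] by metis
  have "\<forall>(\<psi>a, g, \<psi>b) \<in> Wa \<times> Wg \<times> Wb. \<forall>y\<in>Va \<inter> V. stays_in_interior Na Nb T \<psi>a g \<psi>b y"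
    unfolding stays_in_interior_def using Wa(3) Wg(3) Wb(3) by fast
  then show ?thesis
    using Va V Wa Wg Wb
    by (intro exI[of _ "Va \<inter> V"] exI[of _ "Wa \<times> Wg \<times> Wb"]) (simp add: open_Int openin_prod_Times_iff)
qed

lemma isolated_map_uniform_nbhd:
  fixes \<phi>a :: "real \<times> 'a::t2_space \<Rightarrow> 'a" and \<phi>b :: "real \<times> 'b::t2_space \<Rightarrow> 'b"
    and h :: "'a \<Rightarrow> 'b"
  assumes lca: "locally_compact_space (euclidean :: 'a topology)"
    and lcb: "locally_compact_space (euclidean :: 'b topology)"
    and "is_flow \<phi>a" "is_flow \<phi>b" "continuous_on UNIV h"
    and "isolating_nbhd Na \<phi>a" "isolating_nbhd Nb \<phi>b"
    and iso: "isolated_map \<phi>a h \<phi>b Na Nb"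
  obtains W r where "openin triple_compact_open W" "(\<phi>a, h, \<phi>b) \<in> W"
    "\<And>\<psi>a g \<psi>b y. (\<psi>a, g, \<psi>b) \<in> W \<Longrightarrow> y \<in> Na \<Longrightarrow>
       escapes_within Na Nb r \<psi>a g \<psi>b y \<or> stays_in_interior Na Nb T \<psi>a g \<psi>b y"
proof -
  have cont: "continuous_on UNIV \<phi>a" "continuous_on UNIV h" "continuous_on UNIV \<phi>b"
    and compact: "compact Na" "compact Nb"
    using assms unfolding is_flow_def isolating_nbhd_def by simp_all
  then have closed: "closed Na" "closed Nb"
    by (simp_all add: compact_imp_closed)
  let ?P = "\<lambda>r w y. escapes_within Na Nb r (fst w) (fst (snd w)) (snd (snd w)) y \<or>
    stays_in_interior Na Nb T (fst w) (fst (snd w)) (snd (snd w)) y"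
  have P_mono: "\<And>r r' w y. r \<le> r' \<Longrightarrow> ?P r w y \<Longrightarrow> ?P r' w y"
    by (auto dest: escapes_within_mono)
  have base: "(\<phi>a, h, \<phi>b) \<in> topspace triple_compact_open"
    using cont by (simp add: topspace_compact_open)
  have local_nbhd: "\<exists>V W r. open V \<and> x \<in> V \<and> openin triple_compact_open W \<and> (\<phi>a, h, \<phi>b) \<in> W \<and>
      (\<forall>w\<in>W. \<forall>y\<in>V. ?P r w y)" if x: "x \<in> Na" for x
    using isolated_map_escapes_or_stays[OF iso x, of T]
  proof (elim disjE exE)
    fix r
    assume "escapes_within Na Nb r \<phi>a h \<phi>b x"
    from escapes_within_local[OF lca lcb cont closed this] show ?thesis
      by (force split: prod.splits)
  next
    assume "stays_in_interior Na Nb T \<phi>a h \<phi>b x"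
    from stays_in_interior_local[OF lca lcb cont this] show ?thesis
      by (force split: prod.splits)
  qed
  show thesis
    by (rule compact_uniform_nbhd[where P = ?P, OF compact(1) base local_nbhd P_mono]) (auto, rule that)
qed

lemma isolated_map_if_escapes_or_stays:
  assumes flows: "is_flow \<psi>a" "is_flow \<psi>b" and bounds: "Ra \<le> T" "Rb \<le> T"
    and exit_a: "\<And>y. y \<in> frontier Na \<Longrightarrow> \<exists>s. \<bar>s\<bar> \<le> Ra \<and> \<psi>a (s, y) \<notin> Na"
    and exit_b: "\<And>y. y \<in> frontier Nb \<Longrightarrow> \<exists>s. \<bar>s\<bar> \<le> Rb \<and> \<psi>b (s, y) \<notin> Nb"
    and escapes_or_stays: "\<And>y. y \<in> Na \<Longrightarrow>
      escapes_within Na Nb r \<psi>a g \<psi>b y \<or> stays_in_interior Na Nb T \<psi>a g \<psi>b y"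
  shows "isolated_map \<psi>a g \<psi>b Na Nb"
  unfolding isolated_map_def
proof (intro ballI conjI)
  fix p
  assume p: "p \<in> S_set \<psi>a g \<psi>b Na Nb"
  then have orbits: "p \<in> Na" "bwd_orbit \<psi>a p \<subseteq> Na" "fwd_orbit \<psi>b (g p) \<subseteq> Nb"
    unfolding S_set_def by auto
  have "stays_in_interior Na Nb T \<psi>a g \<psi>b p"
    using escapes_or_stays[OF orbits(1)] not_escapes_within_if_S_set[OF p] by blast
  then show "bwd_orbit \<psi>a p \<subseteq> interior Na" "fwd_orbit \<psi>b (g p) \<subseteq> interior Nb"
    using bwd_orbit_subset_interior[OF flows(1) bounds(1) exit_a orbits(2)]
      fwd_orbit_subset_interior[OF flows(2) bounds(2) exit_b orbits(3)]
    unfolding stays_in_interior_def by blast+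
qed

theorem proposition5p2:
  fixes \<phi>a :: "real \<times> 'a::t2_space \<Rightarrow> 'a"
    and \<phi>b :: "real \<times> 'b::t2_space \<Rightarrow> 'b"
    and h :: "'a \<Rightarrow> 'b"
    and Na :: "'a set" and Nb :: "'b set"
  assumes "locally_compact_space (euclidean :: 'a topology)"
    and "locally_compact_space (euclidean :: 'b topology)"
    and "is_flow \<phi>a" and "is_flow \<phi>b"
    and "continuous_on UNIV h"
    and "isolating_nbhd Na \<phi>a" and "isolating_nbhd Nb \<phi>b"
    and "isolated_map \<phi>a h \<phi>b Na Nb"
  shows "\<exists>A. openin (C_topology Na Nb) A \<and> (\<phi>a, h, \<phi>b) \<in> A \<and>
           (\<forall>\<psi>a g \<psi>b. (\<psi>a, g, \<psi>b) \<in> A \<longrightarrow> isolated_map \<psi>a g \<psi>b Na Nb)"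
proof -
  obtain Wa Ra where Wa: "openin compact_open Wa" "\<phi>a \<in> Wa"
      "\<And>\<psi> y. \<psi> \<in> Wa \<Longrightarrow> y \<in> frontier Na \<Longrightarrow> \<exists>s. \<bar>s\<bar> \<le> Ra \<and> \<psi> (s, y) \<notin> Na"
    using isolating_nbhd_uniform_exit[OF assms(1,3,6)] by metis
  obtain Wb Rb where Wb: "openin compact_open Wb" "\<phi>b \<in> Wb"
      "\<And>\<psi> y. \<psi> \<in> Wb \<Longrightarrow> y \<in> frontier Nb \<Longrightarrow> \<exists>s. \<bar>s\<bar> \<le> Rb \<and> \<psi> (s, y) \<notin> Nb"
    using isolating_nbhd_uniform_exit[OF assms(2,4,7)] by metis
  define T where "T = max Ra Rb"
  obtain W r where W: "openin triple_compact_open W" "(\<phi>a, h, \<phi>b) \<in> W"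
      "\<And>\<psi>a g \<psi>b y. (\<psi>a, g, \<psi>b) \<in> W \<Longrightarrow> y \<in> Na \<Longrightarrow>
         escapes_within Na Nb r \<psi>a g \<psi>b y \<or> stays_in_interior Na Nb T \<psi>a g \<psi>b y"
    using isolated_map_uniform_nbhd[OF assms, of T] by metis
  let ?A = "(Wa \<times> topspace compact_open \<times> Wb) \<inter> W \<inter> C_space Na Nb"
  have "openin (C_topology Na Nb) ?A"
    using Wa(1) Wb(1) W(1) by (intro openin_C_topology openin_Int) (simp add: openin_prod_Times_iff)
  moreover have "(\<phi>a, h, \<phi>b) \<in> ?A"
    using Wa(2) Wb(2) W(2) assms(3-7) by (simp add: C_space_def topspace_compact_open is_flow_def)
  moreover have "isolated_map \<psi>a g \<psi>b Na Nb" if "(\<psi>a, g, \<psi>b) \<in> ?A" for \<psi>a g \<psi>b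
    using that Wa(3) Wb(3) W(3)
    by (intro isolated_map_if_escapes_or_stays[where Ra = Ra and Rb = Rb and T = T and r = r])
      (auto simp: C_space_def T_def)
  ultimately show ?thesis
    by blast
qed

end
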